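(* Let $\beta>0$, $\nu\in(1/3,1)$, $\mu_{\mathrm{pp},\gamma}=4(1-\gamma)$, $\mu_\gamma=2\gamma+\beta+2\sqrt{\gamma(\gamma+\beta)}$, $\mu=(1+\sqrt{1+\beta})^2$, $C=C(\beta)=-\frac12\big(2-2\sqrt{1+\beta}+\frac{\beta}{\sqrt{1+\beta}}\big)$ (which is positive), and $\varepsilon=Ct^{\nu-1}$. Then for $t$ large enough and all $\gamma\in[0,1-t^{\nu-1}(1+\beta/2)]$, $$\frac{(\mu_{\mathrm{pp},\gamma}+\mu_\gamma+\varepsilon-\mu)t}{t^{1/3}}\le -Ct^{\nu-1/3}.$$ *)

theory Defs
  imports Complex_Main
begin

definition mu_pp :: "real \<Rightarrow> real" where
  "mu_pp \<gamma> = 4 * (1 - \<gamma>)"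

definition mu_gamma :: "real \<Rightarrow> real \<Rightarrow> real" where
  "mu_gamma \<beta> \<gamma> = 2 * \<gamma> + \<beta> + 2 * sqrt (\<gamma> * (\<gamma> + \<beta>))"

definition mu_full :: "real \<Rightarrow> real" where
  "mu_full \<beta> = (1 + sqrt (1 + \<beta>))^2"

definition C_const :: "real \<Rightarrow> real" where
  "C_const \<beta> = - (1/2) * (2 - 2 * sqrt (1 + \<beta>) + \<beta> / sqrt (1 + \<beta>))"

end

theory Submission
  imports Defs
begin

text \<open>Write \<open>s = sqrt (1 + \<beta>)\<close>, so that \<open>C(\<beta>) = (s - 1)\<^sup>2 / (2 s)\<close>. By AM-GM,
  \<open>2 sqrt (\<gamma> (\<gamma> + \<beta>)) \<le> \<gamma> s + (\<gamma> + \<beta>) / s\<close>, and with this bound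
  \<open>\<mu>\<^sub>p\<^sub>p\<^sub>,\<^sub>\<gamma> + \<mu>\<^sub>\<gamma> - \<mu>\<close> is at most \<open>-2 C (1 - \<gamma>)\<close>. Since \<open>1 - \<gamma> \<ge> \<epsilon>\<close>, adding \<open>\<epsilon> = C t\<^sup>\<nu>\<^sup>-\<^sup>1\<close>
  leaves at most \<open>-\<epsilon>\<close>; multiplying by \<open>t\<^sup>2\<^sup>/\<^sup>3\<close> gives the claim, for every \<open>t \<ge> 1\<close>.\<close>

lemma C_const_eq:
  fixes \<beta> :: real
  assumes "\<beta> > -1"
  shows "C_const \<beta> = (sqrt (1 + \<beta>) - 1)\<^sup>2 / (2 * sqrt (1 + \<beta>))"
proof -
  define s where "s = sqrt (1 + \<beta>)"
  have "s > 0" and "\<beta> = s\<^sup>2 - 1" using assms by (simp_all add: s_def)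
  have "C_const \<beta> = - (1/2) * (2 - 2 * s + \<beta> / s)"
    by (simp add: C_const_def s_def)
  also have "\<dots> = (s - 1)\<^sup>2 / (2 * s)"
    using \<open>s > 0\<close> by (simp add: \<open>\<beta> = s\<^sup>2 - 1\<close> field_simps power2_eq_square)
  finally show ?thesis by (simp add: s_def)
qed

lemma C_const_nonneg:
  fixes \<beta> :: real
  assumes "\<beta> > -1"
  shows "C_const \<beta> \<ge> 0"
  using assms by (simp add: C_const_eq)

lemma mu_gamma_le:
  fixes \<beta> \<gamma> :: real
  assumes "\<beta> \<ge> 0" and "\<gamma> \<ge> 0"
  shows "mu_gamma \<beta> \<gamma> \<le> 2 * \<gamma> + \<beta> + \<gamma> * sqrt (1 + \<beta>) + (\<gamma> + \<beta>) / sqrt (1 + \<beta>)"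
proof -
  define s where "s = sqrt (1 + \<beta>)"
  have s: "s > 0" using assms by (simp add: s_def)
  have "sqrt (\<gamma> * (\<gamma> + \<beta>)) = sqrt ((\<gamma> * s) * ((\<gamma> + \<beta>) / s))"
    using s by simp
  also have "\<dots> \<le> (\<gamma> * s + (\<gamma> + \<beta>) / s) / 2"
    by (rule arith_geo_mean_sqrt) (use assms s in auto)
  finally show ?thesis by (simp add: mu_gamma_def s_def)
qed

lemma mu_gap_le:
  fixes \<beta> \<gamma> :: real
  assumes "\<beta> \<ge> 0" and "\<gamma> \<ge> 0"
  shows "mu_pp \<gamma> + mu_gamma \<beta> \<gamma> - mu_full \<beta> \<le> - 2 * C_const \<beta> * (1 - \<gamma>)"
proof -
  define s where "s = sqrt (1 + \<beta>)"
  have s: "s > 0" and \<beta>: "\<beta> = s\<^sup>2 - 1" using assms by (simp_all add: s_def)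
  have "mu_pp \<gamma> + mu_gamma \<beta> \<gamma> - mu_full \<beta>
      \<le> 4 * (1 - \<gamma>) + 2 * \<gamma> + \<beta> + \<gamma> * s + (\<gamma> + \<beta>) / s - (1 + s)\<^sup>2"
    using mu_gamma_le[OF assms] by (simp add: mu_pp_def mu_full_def s_def)
  also have "\<dots> = - 2 * ((s - 1)\<^sup>2 / (2 * s)) * (1 - \<gamma>)"
    using s by (simp add: \<beta> field_simps power2_eq_square)
  also have "\<dots> = - 2 * C_const \<beta> * (1 - \<gamma>)"
    using assms by (simp add: C_const_eq s_def)
  finally show ?thesis .
qed

lemma mu_gap_plus_eps_le:
  fixes \<beta> \<gamma> e :: real
  assumes "\<beta> \<ge> 0" and "\<gamma> \<ge> 0" and "\<gamma> \<le> 1 - e"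
  shows "mu_pp \<gamma> + mu_gamma \<beta> \<gamma> + C_const \<beta> * e - mu_full \<beta> \<le> - C_const \<beta> * e"
proof -
  have "C_const \<beta> \<ge> 0" using assms(1) by (intro C_const_nonneg) simp
  then have "- 2 * C_const \<beta> * (1 - \<gamma>) \<le> - 2 * C_const \<beta> * e"
    using assms(3) by (simp add: mult_left_mono)
  then show ?thesis using mu_gap_le[OF assms(1,2)] by linarith
qed

lemma powr_div_powr_one_third:
  fixes t :: real
  assumes "t > 0"
  shows "t / t powr (1/3) = t powr (2/3)"
proof -
  have "t = t powr (1/3) * t powr (2/3)"
    using assms by (simp add: powr_add[symmetric])
  then show ?thesis using assms by (simp add: field_simps)
qed

theorem proposition3p13:
  fixes \<beta> \<nu> :: real
  assumes "\<beta> > 0" and "1/3 < \<nu>" and "\<nu> < 1"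
  shows "\<exists>T. \<forall>t::real \<ge> T. \<forall>\<gamma>::real.
           0 \<le> \<gamma> \<and> \<gamma> \<le> 1 - t powr (\<nu> - 1) * (1 + \<beta> / 2) \<longrightarrow>
           (mu_pp \<gamma> + mu_gamma \<beta> \<gamma> + C_const \<beta> * t powr (\<nu> - 1) - mu_full \<beta>) * t / t powr (1/3)
             \<le> - C_const \<beta> * t powr (\<nu> - 1/3)"
proof (intro exI[of _ 1] allI impI)
  fix t \<gamma> :: real
  assume t: "t \<ge> 1" and \<gamma>: "0 \<le> \<gamma> \<and> \<gamma> \<le> 1 - t powr (\<nu> - 1) * (1 + \<beta> / 2)"
  define e where "e = t powr (\<nu> - 1)"
  have "e \<le> e * (1 + \<beta> / 2)" using assms(1) by (simp add: e_def mult_le_cancel_left1)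
  then have "mu_pp \<gamma> + mu_gamma \<beta> \<gamma> + C_const \<beta> * e - mu_full \<beta> \<le> - C_const \<beta> * e"
    using \<gamma> assms(1) by (intro mu_gap_plus_eps_le) (auto simp: e_def)
  then have "(mu_pp \<gamma> + mu_gamma \<beta> \<gamma> + C_const \<beta> * e - mu_full \<beta>) * t powr (2/3)
      \<le> - C_const \<beta> * (e * t powr (2/3))"
    by (subst mult.assoc[symmetric]) (rule mult_right_mono, simp_all)
  also have "e * t powr (2/3) = t powr (\<nu> - 1/3)"
    using t by (simp add: e_def powr_add[symmetric])
  finally show "(mu_pp \<gamma> + mu_gamma \<beta> \<gamma> + C_const \<beta> * t powr (\<nu> - 1) - mu_full \<beta>) * t / t powr (1/3)
      \<le> - C_const \<beta> * t powr (\<nu> - 1/3)"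
    using t by (simp add: e_def powr_div_powr_one_third times_divide_eq_right[symmetric])
qed

end
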